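(* Let $\mathbf{x}$ be a feasible solution of $\textsc{Node-MC-Rel}$, let $\ell$ be uniform on $\{1,\dots,k\}$ and, independently, $\theta$ uniform on $(0,1/2)$, and $C=\bigcup_{i\neq\ell}B^+(s_i,\theta)$. Then $\mathbb{E}\big[\sum_{v\in C}w_v\big]\le 2(1-1/k)\sum_{v\in V}w_vx_v$.
   Context: $G=(V,E)$ is an undirected graph with non-negative node weights $w_v$ and terminal set $S=\{s_1,\dots,s_k\}$, $k\ge2$, forming an independent set. For $i<j$, $\mathcal{P}_{ij}$ is the set of paths between $s_i$ and $s_j$. $\textsc{Node-MC-Rel}$: minimize $\sum_{v\in V\setminus S}w_vx_v$ s.t. $\sum_{v\in p}x_v\ge1$ for all $p\in\mathcal{P}_{ij}$, $i<j$ (sum over all vertices of $p$ including endpoints), $x_v=0$ for $v\in S$, $x\ge0$. $d(a,b)$ is the minimum over paths from $a$ to $b$ of the sum of $x$ over all vertices of the path including both endpoints. $B(u,r)=\{v:d(u,v)\le r\}$; $B^+(u,r)$ is the set of nodes not in $B(u,r)$ adjacent to some node of $B(u,r)$. *)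

theory Defs
  imports "HOL-Analysis.Analysis" "HOL-Library.Extended_Real"
begin

definition is_path :: "'a set \<Rightarrow> ('a \<times> 'a) set \<Rightarrow> 'a list \<Rightarrow> 'a \<Rightarrow> 'a \<Rightarrow> bool" where
  "is_path V E p a b \<longleftrightarrow> p \<noteq> [] \<and> hd p = a \<and> last p = b \<and> distinct p \<and> set p \<subseteq> V
     \<and> (\<forall>i. Suc i < length p \<longrightarrow> (p ! i, p ! Suc i) \<in> E)"

definition path_len :: "('a \<Rightarrow> real) \<Rightarrow> 'a list \<Rightarrow> real" where
  "path_len x p = sum_list (map x p)"

definition node_mc_feasible ::
  "'a set \<Rightarrow> ('a \<times> 'a) set \<Rightarrow> nat \<Rightarrow> (nat \<Rightarrow> 'a) \<Rightarrow> ('a \<Rightarrow> real) \<Rightarrow> bool" where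
  "node_mc_feasible V E k s x \<longleftrightarrow>
     (\<forall>v\<in>V. x v \<ge> 0) \<and> (\<forall>i\<in>{1..k}. x (s i) = 0) \<and>
     (\<forall>i j p. 1 \<le> i \<and> i < j \<and> j \<le> k \<and> is_path V E p (s i) (s j) \<longrightarrow> path_len x p \<ge> 1)"

text \<open>d(a,b): minimum over paths (infinite if no path exists).\<close>
definition dist_x :: "'a set \<Rightarrow> ('a \<times> 'a) set \<Rightarrow> ('a \<Rightarrow> real) \<Rightarrow> 'a \<Rightarrow> 'a \<Rightarrow> ereal" where
  "dist_x V E x a b = Inf {ereal (path_len x p) | p. is_path V E p a b}"

definition ball_x :: "'a set \<Rightarrow> ('a \<times> 'a) set \<Rightarrow> ('a \<Rightarrow> real) \<Rightarrow> 'a \<Rightarrow> real \<Rightarrow> 'a set" where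
  "ball_x V E x u r = {v \<in> V. dist_x V E x u v \<le> ereal r}"

definition ball_plus :: "'a set \<Rightarrow> ('a \<times> 'a) set \<Rightarrow> ('a \<Rightarrow> real) \<Rightarrow> 'a \<Rightarrow> real \<Rightarrow> 'a set" where
  "ball_plus V E x u r = {v \<in> V. v \<notin> ball_x V E x u r \<and> (\<exists>y\<in>ball_x V E x u r. (y, v) \<in> E)}"

definition cut_set :: "'a set \<Rightarrow> ('a \<times> 'a) set \<Rightarrow> nat \<Rightarrow> (nat \<Rightarrow> 'a) \<Rightarrow> ('a \<Rightarrow> real) \<Rightarrow> nat \<Rightarrow> real \<Rightarrow> 'a set" where
  "cut_set V E k s x l \<theta> = (\<Union>i\<in>{1..k} - {l}. ball_plus V E x (s i) \<theta>)"

end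

theory Submission
  imports Defs
begin

text \<open>Fix a vertex \<open>v\<close> and put \<open>e\<^sub>i = d(s\<^sub>i, v) - x\<^sub>v\<close>. If \<open>v \<in> B\<^sup>+(s\<^sub>i, \<theta>)\<close> then
  \<open>\<theta> \<in> [e\<^sub>i, e\<^sub>i + x\<^sub>v)\<close>, an interval of length \<open>x\<^sub>v\<close>. For \<open>i \<noteq> j\<close>, gluing shortest paths from
  \<open>s\<^sub>i\<close> and \<open>s\<^sub>j\<close> at \<open>v\<close> gives an \<open>s\<^sub>i\<close>--\<open>s\<^sub>j\<close> walk of length \<open>e\<^sub>i + e\<^sub>j + x\<^sub>v\<close>, so feasibility
  yields \<open>e\<^sub>i + e\<^sub>j + x\<^sub>v \<ge> 1\<close>. Among the intervals meeting \<open>(0, 1/2)\<close> let \<open>i\<^sub>1, i\<^sub>2\<close> have the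
  two smallest \<open>e\<close>: for \<open>\<ell> = i\<^sub>1\<close> the radii putting \<open>v\<close> into \<open>C\<close> lie in \<open>[e\<^sub>i\<^sub>2, 1/2)\<close>, for any other
  \<open>\<ell>\<close> in \<open>[e\<^sub>i\<^sub>1, 1/2)\<close>, and \<open>(1/2 - e\<^sub>i\<^sub>1) + (1/2 - e\<^sub>i\<^sub>2) \<le> x\<^sub>v\<close>. Summing over \<open>\<ell>\<close>, the measure of
  radii with \<open>v \<in> C\<close> totals at most \<open>(k - 1) x\<^sub>v\<close>; exchanging the sum over vertices with the
  integral over \<open>\<theta>\<close> gives the theorem.\<close>

definition walk :: "'a set \<Rightarrow> ('a \<times> 'a) set \<Rightarrow> 'a list \<Rightarrow> bool" where
  "walk V E p \<longleftrightarrow> p \<noteq> [] \<and> set p \<subseteq> V \<and> successively (\<lambda>a b. (a, b) \<in> E) p"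

lemma is_path_iff_walk:
  "is_path V E p a b \<longleftrightarrow> walk V E p \<and> distinct p \<and> hd p = a \<and> last p = b"
  by (auto simp: is_path_def walk_def successively_conv_nth)

lemma walk_snoc:
  assumes "walk V E p" "v \<in> V" "(last p, v) \<in> E"
  shows "walk V E (p @ [v])"
  using assms by (auto simp: walk_def successively_append_iff)

lemma walk_rev:
  assumes "sym E" "walk V E p"
  shows "walk V E (rev p)"
  using assms by (auto simp: walk_def intro: successively_mono dest: symD)

lemma walk_join:
  assumes "walk V E p" "walk V E q" "last p = hd q"
  shows "walk V E (butlast p @ q)"
  using assms by (cases p rule: rev_cases) (auto simp: walk_def successively_append_iff)

lemma walk_shortcut:
  assumes "walk V E (xs @ y # ys @ y # zs)"
  shows "walk V E (xs @ y # zs)"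
  using assms by (auto simp: walk_def successively_append_iff successively_Cons)

lemma path_len_rev [simp]: "path_len x (rev p) = path_len x p"
  by (simp add: path_len_def rev_map[symmetric])

lemma path_len_append [simp]: "path_len x (p @ q) = path_len x p + path_len x q"
  by (simp add: path_len_def)

lemma path_len_nonneg: "\<forall>v\<in>V. 0 \<le> x v \<Longrightarrow> set p \<subseteq> V \<Longrightarrow> 0 \<le> path_len x p"
  unfolding path_len_def by (induction p) auto

lemma is_path_rev:
  assumes "sym E" "is_path V E p a b"
  shows "is_path V E (rev p) b a"
  using assms walk_rev by (auto simp: is_path_iff_walk hd_rev last_rev)

lemma walk_contains_path:
  assumes "walk V E w" "\<forall>v\<in>V. 0 \<le> x v"
  shows "\<exists>p. is_path V E p (hd w) (last w) \<and> path_len x p \<le> path_len x w"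
  using assms(1)
proof (induction w rule: length_induct)
  case (1 w)
  show ?case
  proof (cases "distinct w")
    case True
    with "1.prems" show ?thesis by (auto simp: is_path_iff_walk)
  next
    case False
    then obtain xs y ys zs where w: "w = xs @ y # ys @ y # zs"
      using not_distinct_decomp by fastforce
    have "walk V E (xs @ y # zs)" using "1.prems" unfolding w by (rule walk_shortcut)
    moreover have "length (xs @ y # zs) < length w" using w by simp
    ultimately obtain p where p: "is_path V E p (hd (xs @ y # zs)) (last (xs @ y # zs))"
      "path_len x p \<le> path_len x (xs @ y # zs)"
      using "1.IH" by blast
    have "0 \<le> path_len x (ys @ [y])"
      using "1.prems" w assms(2) by (intro path_len_nonneg) (auto simp: walk_def)
    then have "path_len x (xs @ y # zs) \<le> path_len x w"
      using w by (simp add: path_len_def)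
    moreover have "hd (xs @ y # zs) = hd w" "last (xs @ y # zs) = last w"
      using w by (simp_all add: hd_append last_append)
    ultimately show ?thesis using p by auto
  qed
qed

lemma walk_prefix: "walk V E (xs @ ys) \<Longrightarrow> xs \<noteq> [] \<Longrightarrow> walk V E xs"
  by (auto simp: walk_def successively_append_iff)

lemma path_prefix:
  assumes "is_path V E q a b" "v \<in> set q" "\<forall>u\<in>V. 0 \<le> x u"
  shows "\<exists>p. is_path V E p a v \<and> path_len x p \<le> path_len x q"
proof -
  obtain ys zs where "q = ys @ v # zs" using split_list[OF assms(2)] by blast
  then have q: "q = (ys @ [v]) @ zs" by simp
  have "is_path V E (ys @ [v]) a v"
    using assms(1) walk_prefix[of V E "ys @ [v]" zs] unfolding q
    by (auto simp: is_path_iff_walk hd_append split: if_splits)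
  moreover have "0 \<le> path_len x zs"
    using assms(1,3) q by (intro path_len_nonneg) (auto simp: is_path_def)
  moreover have "path_len x q = path_len x (ys @ [v]) + path_len x zs"
    unfolding q by (rule path_len_append)
  ultimately show ?thesis by (intro exI[of _ "ys @ [v]"]) auto
qed

lemma finite_paths: "finite V \<Longrightarrow> finite {p. is_path V E p a b}"
  by (rule finite_subset[OF _ finite_subset_distinct[of V]]) (auto simp: is_path_def)

lemma dist_x_le_path_len: "is_path V E p a b \<Longrightarrow> dist_x V E x a b \<le> ereal (path_len x p)"
  unfolding dist_x_def by (rule Inf_lower) blast

lemma dist_x_finite_imp_path: "dist_x V E x a b \<le> ereal r \<Longrightarrow> \<exists>p. is_path V E p a b"
  by (rule ccontr) (simp add: dist_x_def top_ereal_def)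

lemma dist_x_attained:
  assumes "finite V" "is_path V E q a b"
  obtains p where "is_path V E p a b" "dist_x V E x a b = ereal (path_len x p)"
proof -
  let ?S = "(\<lambda>p. ereal (path_len x p)) ` {p. is_path V E p a b}"
  have "finite ?S" "?S \<noteq> {}" using finite_paths[OF assms(1)] assms(2) by auto
  then have "Inf ?S \<in> ?S" using Min_in Min_Inf by metis
  moreover have "dist_x V E x a b = Inf ?S" unfolding dist_x_def by (simp add: image_Collect)
  ultimately show ?thesis using that by auto
qed

lemma ball_plus_shortest_path:
  assumes "finite V" "\<forall>u\<in>V. 0 \<le> x u" "v \<in> ball_plus V E x a \<theta>"
  obtains p where "is_path V E p a v" "dist_x V E x a v = ereal (path_len x p)"
    "path_len x p - x v \<le> \<theta>" "\<theta> < path_len x p"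
proof -
  from assms(3) obtain y where v: "v \<in> V" "\<not> dist_x V E x a v \<le> ereal \<theta>"
    and y: "dist_x V E x a y \<le> ereal \<theta>" "(y, v) \<in> E"
    unfolding ball_plus_def ball_x_def by auto
  obtain q where q: "is_path V E q a y" "dist_x V E x a y = ereal (path_len x q)"
    using dist_x_finite_imp_path[OF y(1)] dist_x_attained[OF assms(1)] by metis
  have q_le: "path_len x q \<le> \<theta>" using q(2) y(1) by simp
  have "v \<notin> set q"
  proof
    assume "v \<in> set q"
    then obtain p where p: "is_path V E p a v" "path_len x p \<le> \<theta>"
      using path_prefix[OF q(1) _ assms(2)] q_le by force
    have "dist_x V E x a v \<le> ereal (path_len x p)" by (rule dist_x_le_path_len[OF p(1)])
    also have "\<dots> \<le> ereal \<theta>" using p(2) by simp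
    finally show False using v(2) by simp
  qed
  moreover have "q \<noteq> []" using q(1) by (simp add: is_path_def)
  ultimately have qv: "is_path V E (q @ [v]) a v"
    using q(1) v(1) y(2) walk_snoc[of V E q v] by (auto simp: is_path_iff_walk)
  then obtain p where p: "is_path V E p a v" "dist_x V E x a v = ereal (path_len x p)"
    using dist_x_attained[OF assms(1)] by blast
  have "path_len x p \<le> path_len x q + x v"
    using dist_x_le_path_len[OF qv, of x] p(2) by (simp add: path_len_def)
  then show ?thesis using that p q_le v(2) by simp
qed

lemma feasible_path_len_ge_1:
  assumes "node_mc_feasible V E k s x" "sym E"
    and "i \<in> {1..k}" "j \<in> {1..k}" "i \<noteq> j" "is_path V E p (s i) (s j)"
  shows "1 \<le> path_len x p"
proof -
  have feas: "1 \<le> path_len x q"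
    if "1 \<le> i'" "i' < j'" "j' \<le> k" "is_path V E q (s i') (s j')" for i' j' q
    using assms(1) that unfolding node_mc_feasible_def by blast
  show ?thesis
  proof (cases "i < j")
    case True
    then show ?thesis using assms(3,4,6) by (intro feas[of i j]) auto
  next
    case False
    then have "1 \<le> path_len x (rev p)"
      using assms(3-5) is_path_rev[OF assms(2,6)] by (intro feas[of j i]) auto
    then show ?thesis by simp
  qed
qed

lemma feasible_two_paths_to_vertex:
  assumes "node_mc_feasible V E k s x" "sym E"
    and "i \<in> {1..k}" "j \<in> {1..k}" "i \<noteq> j"
    and "is_path V E qi (s i) v" "is_path V E qj (s j) v"
  shows "1 \<le> path_len x qi + path_len x qj - x v"
proof -
  have x_nonneg: "\<forall>u\<in>V. 0 \<le> x u" using assms(1) by (simp add: node_mc_feasible_def)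
  have qi: "walk V E qi" "qi \<noteq> []" "hd qi = s i" "last qi = v"
    using assms(6) by (auto simp: is_path_iff_walk walk_def)
  have qj: "walk V E (rev qj)" "hd (rev qj) = v" "last (rev qj) = s j"
    using assms(2,7) walk_rev by (auto simp: is_path_iff_walk last_rev hd_rev)
  then have qj_split: "rev qj = v # tl (rev qj)" by (metis list.collapse walk_def)
  let ?w = "butlast qi @ rev qj"
  have "walk V E ?w" using walk_join[OF qi(1) qj(1)] qi(4) qj(2) by simp
  moreover have "hd ?w = s i"
  proof (cases "butlast qi = []")
    case True
    then have "qi = [v]" using qi(2,4) by (metis append_butlast_last_id append_Nil)
    then show ?thesis using qi(3) qj(2) True by simp
  next
    case False
    then show ?thesis using qi(2,3) by (metis append_butlast_last_id hd_append2)
  qed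
  moreover have "last ?w = s j" using qj_split qj(3) by (metis last_appendR list.discI)
  ultimately obtain p where p: "is_path V E p (s i) (s j)" "path_len x p \<le> path_len x ?w"
    using walk_contains_path[OF _ x_nonneg] by metis
  have "path_len x qi = path_len x (butlast qi) + x v"
    using append_butlast_last_id[OF qi(2)] qi(4) path_len_append[of x "butlast qi" "[v]"]
    by (simp add: path_len_def)
  then have "path_len x ?w = path_len x qi + path_len x qj - x v" by simp
  then show ?thesis using p feasible_path_len_ge_1[OF assms(1-5) p(1)] by linarith
qed

lemma sum_le_single_exception:
  fixes f :: "'i \<Rightarrow> real"
  assumes "finite I" "l0 \<in> I" "f l0 \<le> a" "\<And>l. l \<in> I - {l0} \<Longrightarrow> f l \<le> b"
  shows "sum f I \<le> a + (real (card I) - 1) * b"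
proof -
  have card_I: "real (card I) = real (card (I - {l0})) + 1"
    using card.remove[OF assms(1,2)] by simp
  have "sum f I = f l0 + sum f (I - {l0})" using assms(1,2) by (rule sum.remove)
  also have "\<dots> \<le> a + (\<Sum>l\<in>I - {l0}. b)" using assms(3,4) by (intro add_mono sum_mono) auto
  also have "\<dots> = a + (real (card I) - 1) * b" using card_I by simp
  finally show ?thesis .
qed

lemma measure_le_interval_length:
  fixes a b :: real
  assumes "B \<in> sets lborel" "B \<subseteq> {a..<b}" "a \<le> b"
  shows "measure lborel B \<le> b - a"
proof -
  have "measure lborel B \<le> measure lborel {a..<b}"
    using assms by (intro measure_mono_fmeasurable) (auto simp: fmeasurable_def)
  then show ?thesis using assms(3) by simp
qed

lemma sum_measure_Union_but_one_le_single:
  fixes A :: "'i \<Rightarrow> real set"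
  assumes "finite I" "i0 \<in> I" "\<And>i. i \<in> I - {i0} \<Longrightarrow> A i = {}"
    and "A i0 \<in> sets lborel" "A i0 \<subseteq> {a..<a + d}" "0 \<le> d"
  shows "(\<Sum>l\<in>I. measure lborel (\<Union>i\<in>I - {l}. A i)) \<le> (real (card I) - 1) * d"
proof -
  have "measure lborel (\<Union>i\<in>I - {l}. A i) \<le> d" if "l \<in> I - {i0}" for l
  proof -
    have "(\<Union>i\<in>I - {l}. A i) = A i0" using assms(2,3) that by auto
    then show ?thesis using measure_le_interval_length[OF assms(4,5)] assms(6) by simp
  qed
  moreover have "measure lborel (\<Union>i\<in>I - {i0}. A i) \<le> 0" using assms(3) by simp
  ultimately show ?thesis using sum_le_single_exception[OF assms(1,2), of _ 0 d] by simp
qed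

lemma two_smallest_bound:
  fixes a1 a2 c d m :: real
  assumes "2 * c \<le> a1 + a2 + d" "a1 \<le> a2" "a2 \<le> c" "1 \<le> m"
  shows "(c - a2) + m * (c - a1) \<le> m * d"
proof -
  have "m * (c - a1) \<le> m * (d - (c - a2))" using assms(1,4) by (intro mult_left_mono) auto
  moreover have "c - a2 \<le> m * (c - a2)" using mult_right_mono[of 1 m "c - a2"] assms(3,4) by simp
  ultimately show ?thesis by (simp add: algebra_simps)
qed

lemma sum_measure_Union_but_one_le_two_smallest:
  fixes A :: "'i \<Rightarrow> real set" and e :: "'i \<Rightarrow> real"
  assumes I: "finite I" "i1 \<in> I" "i2 \<in> I" "i1 \<noteq> i2"
    and A_sets: "\<And>i. i \<in> I \<Longrightarrow> A i \<in> sets lborel"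
    and A_sub: "\<And>i. i \<in> I \<Longrightarrow> A i \<subseteq> {e i..<c}" and "A i2 \<noteq> {}"
    and min1: "\<And>j. j \<in> I \<Longrightarrow> A j \<noteq> {} \<Longrightarrow> e i1 \<le> e j"
    and min2: "\<And>j. j \<in> I - {i1} \<Longrightarrow> A j \<noteq> {} \<Longrightarrow> e i2 \<le> e j"
    and "2 * c \<le> e i1 + e i2 + d"
  shows "(\<Sum>l\<in>I. measure lborel (\<Union>i\<in>I - {l}. A i)) \<le> (real (card I) - 1) * d"
proof -
  have Union_le: "measure lborel (\<Union>i\<in>I - {l}. A i) \<le> c - t"
    if t: "\<And>i. i \<in> I - {l} \<Longrightarrow> A i \<noteq> {} \<Longrightarrow> t \<le> e i" "t \<le> c" for l t
  proof -
    have "A i \<subseteq> {t..<c}" if "i \<in> I - {l}" for i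
      using A_sub[of i] t(1)[OF that] that by (cases "A i = {}") (auto simp: subset_iff)
    then have "(\<Union>i\<in>I - {l}. A i) \<subseteq> {t..<c}" by blast
    moreover have "(\<Union>i\<in>I - {l}. A i) \<in> sets lborel" using I(1) A_sets by auto
    ultimately show ?thesis using measure_le_interval_length t(2) by blast
  qed
  have e2_le_c: "e i2 \<le> c" using A_sub[OF I(3)] \<open>A i2 \<noteq> {}\<close> by fastforce
  have e1_le_e2: "e i1 \<le> e i2" using min1[OF I(3) \<open>A i2 \<noteq> {}\<close>] .
  have "(\<Sum>l\<in>I. measure lborel (\<Union>i\<in>I - {l}. A i))
      \<le> (c - e i2) + (real (card I) - 1) * (c - e i1)"
  proof (rule sum_le_single_exception[OF I(1,2)])
    show "measure lborel (\<Union>i\<in>I - {i1}. A i) \<le> c - e i2"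
      using min2 e2_le_c by (intro Union_le) auto
    show "measure lborel (\<Union>i\<in>I - {l}. A i) \<le> c - e i1" for l
      using min1 e1_le_e2 e2_le_c by (intro Union_le) auto
  qed
  also have "\<dots> \<le> (real (card I) - 1) * d"
  proof (rule two_smallest_bound)
    show "1 \<le> real (card I) - 1" using card_mono[OF I(1), of "{i1, i2}"] I(2-4) by simp
  qed (use assms e1_le_e2 e2_le_c in auto)
  finally show ?thesis .
qed

lemma finite_two_smallest:
  fixes e :: "'i \<Rightarrow> 'b::linorder"
  assumes "finite N" "\<And>i. \<not> N \<subseteq> {i}"
  obtains i1 i2 where "i1 \<in> N" "i2 \<in> N" "i1 \<noteq> i2"
    "\<And>j. j \<in> N \<Longrightarrow> e i1 \<le> e j" "\<And>j. j \<in> N - {i1} \<Longrightarrow> e i2 \<le> e j"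
proof -
  have "N \<noteq> {}" using assms(2) by blast
  then obtain i1 where i1: "i1 \<in> N" "\<And>j. j \<in> N \<Longrightarrow> e i1 \<le> e j"
    using arg_min_if_finite[OF assms(1), of e] by (meson not_less)
  have "N - {i1} \<noteq> {}" using assms(2)[of i1] by blast
  then obtain i2 where "i2 \<in> N - {i1}" "\<And>j. j \<in> N - {i1} \<Longrightarrow> e i2 \<le> e j"
    using arg_min_if_finite[of "N - {i1}" e] assms(1) by (meson finite_Diff not_less)
  then show thesis using that i1 by blast
qed

lemma sum_measure_Union_but_one_le:
  fixes A :: "'i \<Rightarrow> real set" and e :: "'i \<Rightarrow> real"
  assumes I: "finite I" "I \<noteq> {}"
    and A_sets: "\<And>i. i \<in> I \<Longrightarrow> A i \<in> sets lborel"
    and A_sub: "\<And>i. i \<in> I \<Longrightarrow> A i \<subseteq> {e i..<e i + d} \<inter> {..<c}"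
    and pair: "\<And>i j. i \<in> I \<Longrightarrow> j \<in> I \<Longrightarrow> i \<noteq> j \<Longrightarrow> A i \<noteq> {} \<Longrightarrow> A j \<noteq> {} \<Longrightarrow>
                 2 * c \<le> e i + e j + d"
    and "0 \<le> d"
  shows "(\<Sum>l\<in>I. measure lborel (\<Union>i\<in>I - {l}. A i)) \<le> (real (card I) - 1) * d"
proof -
  define N where "N = {i\<in>I. A i \<noteq> {}}"
  show ?thesis
  proof (cases "\<exists>i0\<in>I. N \<subseteq> {i0}")
    case True
    then obtain i0 where "i0 \<in> I" "\<And>i. i \<in> I - {i0} \<Longrightarrow> A i = {}" by (auto simp: N_def)
    then show ?thesis
      using I(1) A_sets A_sub \<open>0 \<le> d\<close> by (intro sum_measure_Union_but_one_le_single) auto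
  next
    case False
    then have "\<not> N \<subseteq> {i}" for i using I(2) by (auto simp: N_def)
    moreover have "finite N" using I(1) by (simp add: N_def)
    ultimately obtain i1 i2 where "i1 \<in> N" "i2 \<in> N" "i1 \<noteq> i2"
      "\<And>j. j \<in> N \<Longrightarrow> e i1 \<le> e j" "\<And>j. j \<in> N - {i1} \<Longrightarrow> e i2 \<le> e j"
      using finite_two_smallest by metis
    moreover have "A i \<subseteq> {e i..<c}" if "i \<in> I" for i using A_sub[OF that] by (auto simp: subset_iff)
    ultimately show ?thesis
      using I(1) A_sets pair[of i1 i2]
      by (intro sum_measure_Union_but_one_le_two_smallest[of I i1 i2 A e c d]) (auto simp: N_def)
  qed
qed

lemma ball_plus_radii_borel:
  assumes "finite V"
  shows "{\<theta>::real. v \<in> ball_plus V E x a \<theta>} \<in> sets borel"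
proof -
  have "Measurable.pred borel (\<lambda>\<theta>::real. v \<in> V \<and> \<not> dist_x V E x a v \<le> ereal \<theta>
      \<and> (\<exists>y\<in>V. dist_x V E x a y \<le> ereal \<theta> \<and> (y, v) \<in> E))"
    using assms by measurable
  moreover have "{\<theta>::real. v \<in> ball_plus V E x a \<theta>} = {\<theta>\<in>space borel. v \<in> V \<and> \<not> dist_x V E x a v \<le> ereal \<theta>
      \<and> (\<exists>y\<in>V. dist_x V E x a y \<le> ereal \<theta> \<and> (y, v) \<in> E)}"
    by (auto simp: ball_plus_def ball_x_def)
  ultimately show ?thesis by (simp add: pred_def)
qed

lemma cut_set_radii_borel:
  assumes "finite V"
  shows "{\<theta>::real. v \<in> cut_set V E k s x l \<theta>} \<in> sets borel"
proof -
  have "{\<theta>. v \<in> cut_set V E k s x l \<theta>} = (\<Union>i\<in>{1..k} - {l}. {\<theta>. v \<in> ball_plus V E x (s i) \<theta>})"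
    by (auto simp: cut_set_def)
  then show ?thesis using ball_plus_radii_borel[OF assms] by auto
qed

lemma cut_set_subset: "cut_set V E k s x l \<theta> \<subseteq> V"
  by (auto simp: cut_set_def ball_plus_def)

lemma set_integral_sum_over_random_subset:
  fixes w :: "'a \<Rightarrow> real" and C :: "'b \<Rightarrow> 'a set"
  assumes "finite V" "\<And>\<theta>. C \<theta> \<subseteq> V"
    and "T \<in> sets M" "emeasure M T < \<infinity>" "\<And>v. {\<theta>\<in>space M. v \<in> C \<theta>} \<in> sets M"
  shows "(LINT \<theta>:T|M. (\<Sum>v\<in>C \<theta>. w v)) = (\<Sum>v\<in>V. w v * measure M (T \<inter> {\<theta>\<in>space M. v \<in> C \<theta>}))"
proof -
  define S where "S v = T \<inter> {\<theta>\<in>space M. v \<in> C \<theta>}" for v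
  have S_sets: "S v \<in> sets M" for v using assms(3,5) by (simp add: S_def)
  have S_space: "S v \<inter> space M = S v" for v by (auto simp: S_def)
  have S_finite: "emeasure M (S v) < \<infinity>" for v
    using emeasure_mono[of "S v" T M] assms(3,4) by (auto simp: S_def)
  have "indicator T \<theta> *\<^sub>R (\<Sum>v\<in>C \<theta>. w v) = (\<Sum>v\<in>V. w v * indicator (S v) \<theta>)"
    if "\<theta> \<in> space M" for \<theta>
  proof -
    have "(\<Sum>v\<in>C \<theta>. w v) = (\<Sum>v\<in>V. if v \<in> C \<theta> then w v else 0)"
      using sum.inter_restrict[OF assms(1), of w "C \<theta>"] assms(2)[of \<theta>] by (simp add: Int_absorb1)
    then show ?thesis
      using that by (auto simp: S_def indicator_def sum_distrib_left intro!: sum.cong)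
  qed
  then have "(LINT \<theta>:T|M. (\<Sum>v\<in>C \<theta>. w v)) = (LINT \<theta>|M. (\<Sum>v\<in>V. w v * indicator (S v) \<theta>))"
    unfolding set_lebesgue_integral_def by (intro Bochner_Integration.integral_cong) auto
  also have "\<dots> = (\<Sum>v\<in>V. w v * measure M (S v))"
    using integrable_real_indicator[OF S_sets S_finite] by (simp add: S_space)
  finally show ?thesis by (simp add: S_def)
qed

lemma set_integral_cut_weight:
  assumes "finite V"
  shows "(LINT \<theta>:{0<..<1/2}|lborel. (\<Sum>v\<in>cut_set V E k s x l \<theta>. w v))
       = (\<Sum>v\<in>V. w v * measure lborel ({0<..<1/2} \<inter> {\<theta>. v \<in> cut_set V E k s x l \<theta>}))"
proof -
  have "(LINT \<theta>:{0<..<1/2}|lborel. (\<Sum>v\<in>cut_set V E k s x l \<theta>. w v))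
      = (\<Sum>v\<in>V. w v * measure lborel ({0<..<1/2} \<inter> {\<theta>\<in>space lborel. v \<in> cut_set V E k s x l \<theta>}))"
    using cut_set_radii_borel[OF assms]
    by (intro set_integral_sum_over_random_subset assms cut_set_subset) (auto simp del: ennreal_half)
  then show ?thesis by simp
qed

lemma sum_measure_cut_le:
  assumes "finite V" "sym E" "node_mc_feasible V E k s x" "1 \<le> k" "v \<in> V"
  shows "(\<Sum>l\<in>{1..k}. measure lborel ({0<..<1/2} \<inter> {\<theta>. v \<in> cut_set V E k s x l \<theta>}))
           \<le> (real k - 1) * x v"
proof -
  have x_nonneg: "\<forall>u\<in>V. 0 \<le> x u" using assms(3) by (simp add: node_mc_feasible_def)
  define A where "A i = {0<..<1/2} \<inter> {\<theta>::real. v \<in> ball_plus V E x (s i) \<theta>}" for i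
  \<comment> \<open>\<open>real_of_ereal\<close> maps \<open>\<infinity>\<close> to 0, but \<open>e i\<close> is only used where \<open>A i \<noteq> {}\<close>, so a path exists\<close>
  define e where "e i = real_of_ereal (dist_x V E x (s i) v) - x v" for i
  have A_path: "\<exists>p. is_path V E p (s i) v \<and> path_len x p = e i + x v \<and> e i \<le> \<theta> \<and> \<theta> < e i + x v"
    if "\<theta> \<in> A i" for i \<theta>
  proof -
    have "v \<in> ball_plus V E x (s i) \<theta>" using that by (simp add: A_def)
    then obtain p where "is_path V E p (s i) v" "dist_x V E x (s i) v = ereal (path_len x p)"
      "path_len x p - x v \<le> \<theta>" "\<theta> < path_len x p"
      by (rule ball_plus_shortest_path[OF assms(1) x_nonneg])
    then show ?thesis by (auto simp: e_def)
  qed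
  have "(\<Sum>l\<in>{1..k}. measure lborel (\<Union>i\<in>{1..k} - {l}. A i)) \<le> (real (card {1..k}) - 1) * x v"
  proof (rule sum_measure_Union_but_one_le)
    show "finite {1..k}" "{1..k} \<noteq> {}" using assms(4) by auto
    show "A i \<in> sets lborel" for i
      using ball_plus_radii_borel[OF assms(1)] by (simp add: A_def)
    show "A i \<subseteq> {e i..<e i + x v} \<inter> {..<1/2}" for i
      using A_path by (fastforce simp: A_def)
    show "0 \<le> x v" using x_nonneg assms(5) by simp
    fix i j assume ij: "i \<in> {1..k}" "j \<in> {1..k}" "i \<noteq> j" "A i \<noteq> {}" "A j \<noteq> {}"
    then obtain p q where "is_path V E p (s i) v" "path_len x p = e i + x v"
      "is_path V E q (s j) v" "path_len x q = e j + x v"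
      using A_path by (metis ex_in_conv)
    then show "2 * (1/2) \<le> e i + e j + x v"
      using feasible_two_paths_to_vertex[OF assms(3,2) ij(1-3)] by fastforce
  qed
  moreover have "{0<..<1/2} \<inter> {\<theta>. v \<in> cut_set V E k s x l \<theta>} = (\<Union>i\<in>{1..k} - {l}. A i)" for l
    by (auto simp: cut_set_def A_def)
  ultimately show ?thesis by simp
qed

theorem mainTheorem11:
  fixes V :: "'a set" and E :: "('a \<times> 'a) set" and w x :: "'a \<Rightarrow> real"
    and k :: nat and s :: "nat \<Rightarrow> 'a"
  assumes "finite V"
    and "sym E" and "irrefl E" and "E \<subseteq> V \<times> V"
    and "\<forall>v\<in>V. w v \<ge> 0"
    and "k \<ge> 2"
    and "inj_on s {1..k}" and "s ` {1..k} \<subseteq> V"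
    and "\<forall>i\<in>{1..k}. \<forall>j\<in>{1..k}. (s i, s j) \<notin> E"
    and "node_mc_feasible V E k s x"
  shows "(1 / real k) * (\<Sum>l\<in>{1..k}.
            2 * (LINT \<theta>:{0<..<1/2}|lborel. (\<Sum>v\<in>cut_set V E k s x l \<theta>. w v)))
         \<le> 2 * (1 - 1 / real k) * (\<Sum>v\<in>V. w v * x v)"
proof -
  let ?m = "\<lambda>l v. measure lborel ({0<..<1/2} \<inter> {\<theta>::real. v \<in> cut_set V E k s x l \<theta>})"
  have "(1 / real k) * (\<Sum>l\<in>{1..k}.
            2 * (LINT \<theta>:{0<..<1/2}|lborel. (\<Sum>v\<in>cut_set V E k s x l \<theta>. w v)))
      = (2 / real k) * (\<Sum>v\<in>V. w v * (\<Sum>l\<in>{1..k}. ?m l v))"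
    by (simp add: set_integral_cut_weight[OF assms(1)] sum_distrib_left sum_distrib_right
        mult.assoc mult.left_commute) (rule sum.swap)
  also have "\<dots> \<le> (2 / real k) * (\<Sum>v\<in>V. w v * ((real k - 1) * x v))"
    using sum_measure_cut_le[OF assms(1,2,10)] assms(5,6) by (intro mult_left_mono sum_mono) auto
  also have "\<dots> = (2 / real k) * ((real k - 1) * (\<Sum>v\<in>V. w v * x v))"
    by (simp add: sum_distrib_left mult.left_commute)
  also have "\<dots> = 2 * (1 - 1 / real k) * (\<Sum>v\<in>V. w v * x v)"
    using assms(6) by (simp add: field_simps)
  finally show ?thesis .
qed

end
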